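(* Let $D$ be a strict, asymmetric digraph of order $n$. Then the number $c(L(D))$ of connected components of $L(D)$ satisfies $c(L(D))\le f(n)$, where $f(n)=\frac{n^2-1}{4}$ if $n$ is odd and $f(n)=\frac{n^2}{4}$ if $n$ is even. Moreover, equality holds if and only if either $D$ is the transitive tournament of order $3$, or there is a partition $V(D)=X\cup Y$ with $\big||X|-|Y|\big|\le 1$ such that $A(D)=\{(x,y): x\in X,\ y\in Y\}$ (i.e. $D$ is the orientation of the balanced complete bipartite graph on $X,Y$ with all arcs directed from $X$ to $Y$).
   Context: A digraph is strict if it has no loops and no parallel arcs, and asymmetric if $(u,v)\in A(D)$ implies $(v,u)\notin A(D)$. For a digraph $D$, the line graph $L(D)$ is the graph with vertex set $A(D)$ in which two distinct arcs are adjacent if and only if the head of one is the tail of the other. A tournament is an orientation of a complete graph; it is transitive if it has no directed cycle. *)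

theory Defs
  imports Main
begin

text \<open>A digraph is given by a finite vertex set V and an arc set A \<subseteq> V \<times> V
  (a set of ordered pairs, hence no parallel arcs).\<close>

definition digraph :: "'a set \<Rightarrow> ('a \<times> 'a) set \<Rightarrow> bool" where
  "digraph V A \<longleftrightarrow> finite V \<and> A \<subseteq> V \<times> V"

definition strict_digraph :: "'a set \<Rightarrow> ('a \<times> 'a) set \<Rightarrow> bool" where
  "strict_digraph V A \<longleftrightarrow> digraph V A \<and> (\<forall>v. (v, v) \<notin> A)"

definition asymmetric :: "('a \<times> 'a) set \<Rightarrow> bool" where
  "asymmetric A \<longleftrightarrow> (\<forall>u v. (u, v) \<in> A \<longrightarrow> (v, u) \<notin> A)"

definition line_adj :: "('a \<times> 'a) set \<Rightarrow> ('a \<times> 'a) rel" where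
  "line_adj A = {(e, f). e \<in> A \<and> f \<in> A \<and> e \<noteq> f \<and> (snd e = fst f \<or> snd f = fst e)}"

definition num_components_line :: "('a \<times> 'a) set \<Rightarrow> nat" where
  "num_components_line A = card (A // ((line_adj A)\<^sup>*))"

definition f_bound :: "nat \<Rightarrow> nat" where
  "f_bound n = (if odd n then (n^2 - 1) div 4 else n^2 div 4)"

definition tournament :: "'a set \<Rightarrow> ('a \<times> 'a) set \<Rightarrow> bool" where
  "tournament V A \<longleftrightarrow> digraph V A \<and> (\<forall>v. (v, v) \<notin> A) \<and>
     (\<forall>u\<in>V. \<forall>v\<in>V. u \<noteq> v \<longrightarrow> ((u, v) \<in> A \<longleftrightarrow> (v, u) \<notin> A))"

definition transitive_tournament :: "'a set \<Rightarrow> ('a \<times> 'a) set \<Rightarrow> bool" where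
  "transitive_tournament V A \<longleftrightarrow> tournament V A \<and> acyclic A"

end

theory Submission
  imports Defs
begin

text \<open>Split the vertices into sources, sinks and transit vertices (with both in- and out-arcs).
  All arcs at a transit vertex lie in one component of \<open>L(D)\<close>, so every component except
  those consisting of a single source-to-sink arc owns its own nonempty set of transit vertices.
  With \<open>p\<close> sources, \<open>q\<close> sinks and \<open>t\<close> transit vertices this gives
  \<open>c(L(D)) \<le> p q + t\<close>, where \<open>p + q + t \<le> n\<close>; if there are no sources or no sinks, every
  component even owns two transit vertices. Elementary estimates of \<open>p q + t\<close> against
  \<open>n\<^sup>2/4\<close> then give the bound, and their equality cases the two extremal digraphs.
  Asymmetry is needed only to ensure \<open>n \<ge> 3\<close> once there is a transit vertex: a digon
  (\<open>n = 2\<close>, one component) would otherwise attain the bound.\<close>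

abbreviation line_conn :: "('a \<times> 'a) set \<Rightarrow> (('a \<times> 'a) \<times> ('a \<times> 'a)) set" where
  "line_conn A \<equiv> (line_adj A)\<^sup>*"

lemma quotient_eq_Image_image: "A // r = (\<lambda>a. r``{a}) ` A"
  by (auto simp: quotient_def)

lemma sym_line_adj: "sym (line_adj A)"
  unfolding line_adj_def sym_def by auto

lemma line_conn_sym: "(e, f) \<in> line_conn A \<Longrightarrow> (f, e) \<in> line_conn A"
  using sym_rtrancl[OF sym_line_adj] unfolding sym_def by blast

lemma line_conn_Image_eq:
  assumes "(a, b) \<in> line_conn A"
  shows "line_conn A``{a} = line_conn A``{b}"
  using assms line_conn_sym by (blast intro: rtrancl_trans)

lemma line_conn_closed: "(e, f) \<in> line_conn A \<Longrightarrow> e \<in> A \<Longrightarrow> f \<in> A"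
  by (induct rule: rtrancl_induct) (auto simp: line_adj_def)

definition sources :: "('a \<times> 'a) set \<Rightarrow> 'a set" where
  "sources A = {v. (\<exists>y. (v, y) \<in> A) \<and> (\<nexists>x. (x, v) \<in> A)}"

definition sinks :: "('a \<times> 'a) set \<Rightarrow> 'a set" where
  "sinks A = {v. (\<exists>x. (x, v) \<in> A) \<and> (\<nexists>y. (v, y) \<in> A)}"

definition transit_vertices :: "('a \<times> 'a) set \<Rightarrow> 'a set" where
  "transit_vertices A = {v. (\<exists>x. (x, v) \<in> A) \<and> (\<exists>y. (v, y) \<in> A)}"

definition incident_transit_vertices :: "('a \<times> 'a) set \<Rightarrow> ('a \<times> 'a) set \<Rightarrow> 'a set" where
  "incident_transit_vertices A C = {v \<in> transit_vertices A. \<exists>e\<in>C. v = fst e \<or> v = snd e}"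

lemma incident_transit_vertices_subset: "incident_transit_vertices A C \<subseteq> transit_vertices A"
  unfolding incident_transit_vertices_def by blast

lemma card_sources_sinks_transit_le:
  assumes "strict_digraph V A"
  shows "card (sources A) + card (sinks A) + card (transit_vertices A) \<le> card V"
proof -
  have finV: "finite V" and sub: "A \<subseteq> V \<times> V"
    using assms unfolding strict_digraph_def digraph_def by auto
  have classes: "sources A \<union> sinks A \<union> transit_vertices A \<subseteq> V"
    using sub unfolding sources_def sinks_def transit_vertices_def by auto
  then have fin: "finite (sources A)" "finite (sinks A)" "finite (transit_vertices A)"
    using finV by (auto intro: finite_subset)
  have "card (sources A) + card (sinks A) + card (transit_vertices A)
        = card (sources A \<union> sinks A \<union> transit_vertices A)"
  proof -
    have "sources A \<inter> sinks A = {}" "(sources A \<union> sinks A) \<inter> transit_vertices A = {}"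
      unfolding sources_def sinks_def transit_vertices_def by auto
    with fin show ?thesis by (simp add: card_Un_disjoint)
  qed
  also have "\<dots> \<le> card V"
    using classes finV by (rule card_mono[rotated])
  finally show ?thesis .
qed

lemma finite_transit_vertices:
  assumes "strict_digraph V A"
  shows "finite (transit_vertices A)"
  using assms unfolding strict_digraph_def digraph_def transit_vertices_def
  by (auto intro: finite_subset)

lemma arc_subset_sources_times_sinks:
  assumes "transit_vertices A = {}"
  shows "A \<subseteq> sources A \<times> sinks A"
  using assms unfolding transit_vertices_def sources_def sinks_def by fast

lemma card_ge_3_if_transit_vertex:
  assumes "strict_digraph V A" and "asymmetric A" and "transit_vertices A \<noteq> {}"
  shows "3 \<le> card V"
proof -
  have finV: "finite V" and sub: "A \<subseteq> V \<times> V" and noloop: "\<forall>v. (v, v) \<notin> A"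
    using assms(1) unfolding strict_digraph_def digraph_def by auto
  obtain x v y where xv: "(x, v) \<in> A" and vy: "(v, y) \<in> A"
    using assms(3) unfolding transit_vertices_def by blast
  have "x \<noteq> v" "v \<noteq> y" "x \<noteq> y"
    using xv vy noloop assms(2) unfolding asymmetric_def by auto
  then have "card {x, v, y} = 3" by simp
  moreover have "card {x, v, y} \<le> card V"
    using finV sub xv vy by (intro card_mono) auto
  ultimately show ?thesis by simp
qed

text \<open>An in-arc and an out-arc at \<open>v\<close> are adjacent in \<open>L(D)\<close>, so every arc at \<open>v\<close> is
  connected to a fixed out-arc \<open>(v, y)\<close>, an out-arc through a fixed in-arc \<open>(x, v)\<close>.\<close>

lemma arcs_at_transit_vertex_connected:
  assumes noloop: "\<forall>v. (v, v) \<notin> A" and v: "v \<in> transit_vertices A"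
    and e: "e \<in> A" "v = fst e \<or> v = snd e" and f: "f \<in> A" "v = fst f \<or> v = snd f"
  shows "(e, f) \<in> line_conn A"
proof -
  obtain x y where xv: "(x, v) \<in> A" and vy: "(v, y) \<in> A"
    using v unfolding transit_vertices_def by blast
  have to_out: "(g, (v, y)) \<in> line_conn A" if g: "g \<in> A" "v = fst g \<or> v = snd g" for g
  proof (cases "snd g = v")
    case True
    with g vy noloop have "g = (v, y) \<or> (g, (v, y)) \<in> line_adj A"
      unfolding line_adj_def by auto
    then show ?thesis by auto
  next
    case False
    with g xv noloop have "(g, (x, v)) \<in> line_adj A"
      unfolding line_adj_def by (cases g) auto
    moreover have "((x, v), (v, y)) \<in> line_adj A"
      using xv vy noloop unfolding line_adj_def by auto
    ultimately show ?thesis by (meson r_into_rtrancl rtrancl_trans)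
  qed
  show ?thesis
    using to_out[OF e] line_conn_sym[OF to_out[OF f]] by (rule rtrancl_trans)
qed

lemma incident_transit_vertices_disjoint:
  assumes noloop: "\<forall>v. (v, v) \<notin> A"
    and C: "C \<in> A // line_conn A" and C': "C' \<in> A // line_conn A" and "C \<noteq> C'"
  shows "incident_transit_vertices A C \<inter> incident_transit_vertices A C' = {}"
proof (rule ccontr)
  obtain a a' where a: "a \<in> A" "C = line_conn A``{a}" and a': "a' \<in> A" "C' = line_conn A``{a'}"
    using C C' unfolding quotient_eq_Image_image by blast
  assume "incident_transit_vertices A C \<inter> incident_transit_vertices A C' \<noteq> {}"
  then obtain v e e' where v: "v \<in> transit_vertices A"
    and e: "e \<in> C" "v = fst e \<or> v = snd e" and e': "e' \<in> C'" "v = fst e' \<or> v = snd e'"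
    unfolding incident_transit_vertices_def by blast
  have "(a, e) \<in> line_conn A" "(a', e') \<in> line_conn A"
    using a a' e e' by auto
  moreover from this have "(e, e') \<in> line_conn A"
    using arcs_at_transit_vertex_connected[OF noloop v] e e' a a' line_conn_closed by blast
  ultimately have "(a, a') \<in> line_conn A"
    by (meson line_conn_sym rtrancl_trans)
  then have "C = C'"
    using a a' line_conn_Image_eq by metis
  with \<open>C \<noteq> C'\<close> show False ..
qed

lemma incident_transit_vertices_nonempty:
  assumes "a \<in> A" and "a \<notin> sources A \<times> sinks A"
  shows "incident_transit_vertices A (line_conn A``{a}) \<noteq> {}"
proof -
  obtain u w where a: "a = (u, w)" by (cases a)
  have "a \<in> line_conn A``{a}" by simp
  moreover have "u \<in> transit_vertices A \<or> w \<in> transit_vertices A"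
    using assms a unfolding sources_def sinks_def transit_vertices_def by auto
  ultimately show ?thesis
    using a unfolding incident_transit_vertices_def by force
qed

text \<open>Without sources the tail \<open>u\<close> of an arc has an in-arc \<open>(x, u)\<close>, whose tail is transit as
  well; dually without sinks.\<close>

lemma two_le_card_incident_transit_vertices:
  assumes "strict_digraph V A" and "sources A = {} \<or> sinks A = {}" and "(u, w) \<in> A"
  shows "2 \<le> card (incident_transit_vertices A (line_conn A``{(u, w)}))"
proof -
  let ?C = "line_conn A``{(u, w)}"
  have noloop: "\<forall>v. (v, v) \<notin> A"
    using assms(1) unfolding strict_digraph_def by simp
  have in_C: "e \<in> ?C" if "z \<in> transit_vertices A" "z = u \<or> z = w" "e \<in> A" "z = fst e \<or> z = snd e"
    for z e
    using arcs_at_transit_vertex_connected[OF noloop that(1) assms(3) _ that(3,4)] that(2) by auto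
  have "\<exists>x z. x \<noteq> z \<and> {x, z} \<subseteq> incident_transit_vertices A ?C"
  proof (cases "sources A = {}")
    case True
    then have u: "u \<in> transit_vertices A"
      using assms(3) unfolding sources_def transit_vertices_def by auto
    then obtain x where xu: "(x, u) \<in> A"
      unfolding transit_vertices_def by blast
    with True have "x \<in> transit_vertices A"
      unfolding sources_def transit_vertices_def by auto
    moreover have "(x, u) \<in> ?C" "(u, w) \<in> ?C"
      using in_C[OF u _ xu] by auto
    ultimately show ?thesis
      using u xu noloop unfolding incident_transit_vertices_def by (intro exI[of _ x] exI[of _ u]) force
  next
    case False
    with assms(2) have "sinks A = {}" by simp
    then have w: "w \<in> transit_vertices A"
      using assms(3) unfolding sinks_def transit_vertices_def by auto
    then obtain y where wy: "(w, y) \<in> A"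
      unfolding transit_vertices_def by blast
    with \<open>sinks A = {}\<close> have "y \<in> transit_vertices A"
      unfolding sinks_def transit_vertices_def by auto
    moreover have "(w, y) \<in> ?C" "(u, w) \<in> ?C"
      using in_C[OF w _ wy] by auto
    ultimately show ?thesis
      using w wy noloop unfolding incident_transit_vertices_def by (intro exI[of _ w] exI[of _ y]) force
  qed
  then obtain x z where "x \<noteq> z" "{x, z} \<subseteq> incident_transit_vertices A ?C" by blast
  moreover have "finite (incident_transit_vertices A ?C)"
    by (rule finite_subset[OF incident_transit_vertices_subset finite_transit_vertices[OF assms(1)]])
  ultimately show ?thesis
    using card_mono[of "incident_transit_vertices A ?C" "{x, z}"] by simp
qed

lemma mult_card_le_card_of_disjoint_subsets:
  assumes "finite T"
    and "\<And>C. C \<in> K \<Longrightarrow> g C \<subseteq> T" and "\<And>C. C \<in> K \<Longrightarrow> k \<le> card (g C)"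
    and "\<And>C C'. C \<in> K \<Longrightarrow> C' \<in> K \<Longrightarrow> C \<noteq> C' \<Longrightarrow> g C \<inter> g C' = {}"
  shows "k * card K \<le> card T"
proof (cases "finite K")
  case True
  have "k * card K \<le> (\<Sum>C\<in>K. card (g C))"
    using sum_bounded_below[of K k "\<lambda>C. card (g C)"] assms(3) by (simp add: mult.commute)
  also have "\<dots> = card (\<Union> (g ` K))"
    using True assms(1,2,4) by (intro card_UN_disjoint[symmetric]) (auto intro: finite_subset)
  also have "\<dots> \<le> card T"
    using assms(1,2) by (intro card_mono) auto
  finally show ?thesis .
qed simp

lemma num_components_line_le:
  assumes "strict_digraph V A"
  shows "num_components_line A \<le> card (A \<inter> (sources A \<times> sinks A)) + card (transit_vertices A)"
proof -
  have finA: "finite A" and noloop: "\<forall>v. (v, v) \<notin> A"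
    using assms finite_subset[of A "V \<times> V"] unfolding strict_digraph_def digraph_def by auto
  define K where "K = A // line_conn A"
  define K1 where "K1 = (\<lambda>a. line_conn A``{a}) ` (A \<inter> (sources A \<times> sinks A))"
  have "card K \<le> card (K1 \<union> (K - K1))"
    using finA unfolding K_def K1_def quotient_eq_Image_image by (intro card_mono) auto
  also have "\<dots> \<le> card K1 + card (K - K1)"
    by (rule card_Un_le)
  also have "card K1 \<le> card (A \<inter> (sources A \<times> sinks A))"
    unfolding K1_def using finA by (intro card_image_le) simp
  also have "card (K - K1) \<le> card (transit_vertices A)"
  proof -
    have "1 * card (K - K1) \<le> card (transit_vertices A)"
    proof (rule mult_card_le_card_of_disjoint_subsets[OF finite_transit_vertices[OF assms]])
      fix C assume "C \<in> K - K1"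
      then obtain a where "a \<in> A" "C = line_conn A``{a}" "a \<notin> sources A \<times> sinks A"
        unfolding K_def K1_def quotient_eq_Image_image by blast
      then have "incident_transit_vertices A C \<noteq> {}"
        by (simp add: incident_transit_vertices_nonempty)
      then show "1 \<le> card (incident_transit_vertices A C)"
        using finite_subset[OF incident_transit_vertices_subset finite_transit_vertices[OF assms]]
        by (simp add: Suc_le_eq card_gt_0_iff)
    next
      fix C C' assume "C \<in> K - K1" "C' \<in> K - K1" "C \<noteq> C'"
      then show "incident_transit_vertices A C \<inter> incident_transit_vertices A C' = {}"
        unfolding K_def by (intro incident_transit_vertices_disjoint[OF noloop]) auto
    qed (rule incident_transit_vertices_subset)
    then show ?thesis by simp
  qed
  finally show ?thesis
    by (simp only: num_components_line_def K_def)
qed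

lemma two_mult_num_components_line_le:
  assumes "strict_digraph V A" and "sources A = {} \<or> sinks A = {}"
  shows "2 * num_components_line A \<le> card (transit_vertices A)"
  unfolding num_components_line_def
proof (rule mult_card_le_card_of_disjoint_subsets[OF finite_transit_vertices[OF assms(1)]])
  fix C assume "C \<in> A // line_conn A"
  then obtain u w where "(u, w) \<in> A" "C = line_conn A``{(u, w)}"
    unfolding quotient_eq_Image_image by auto
  then show "2 \<le> card (incident_transit_vertices A C)"
    using two_le_card_incident_transit_vertices[OF assms] by simp
next
  fix C C' assume "C \<in> A // line_conn A" "C' \<in> A // line_conn A" "C \<noteq> C'"
  moreover have "\<forall>v. (v, v) \<notin> A"
    using assms(1) unfolding strict_digraph_def by simp
  ultimately show "incident_transit_vertices A C \<inter> incident_transit_vertices A C' = {}"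
    by (intro incident_transit_vertices_disjoint)
qed (rule incident_transit_vertices_subset)

lemma f_bound_bounds: "4 * f_bound n \<le> n\<^sup>2" "n\<^sup>2 \<le> 4 * f_bound n + 1"
proof -
  have "4 * f_bound n \<le> n\<^sup>2 \<and> n\<^sup>2 \<le> 4 * f_bound n + 1"
  proof (cases "even n")
    case True
    then obtain k where "n = 2 * k" by (rule evenE)
    then show ?thesis unfolding f_bound_def by (simp add: power_mult_distrib)
  next
    case False
    then obtain k where n: "n = 2 * k + 1" by (rule oddE)
    then have "n\<^sup>2 = 4 * (k\<^sup>2 + k) + 1" by (simp add: power2_eq_square algebra_simps)
    then show ?thesis using False unfolding f_bound_def by simp
  qed
  then show "4 * f_bound n \<le> n\<^sup>2" "n\<^sup>2 \<le> 4 * f_bound n + 1" by auto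
qed

lemma mult_eq_f_bound_add:
  assumes "x \<le> y + 1" and "y \<le> x + (1::nat)"
  shows "x * y = f_bound (x + y)"
proof -
  consider "x = y" | "x = y + 1" | "y = x + 1" using assms by linarith
  then show ?thesis
    by cases (simp_all add: f_bound_def power2_eq_square algebra_simps)
qed

lemma four_mult_le_square_add: "4 * (p * q) \<le> ((p::nat) + q)\<^sup>2"
proof -
  have "(int p + int q)\<^sup>2 = 4 * int p * int q + (int p - int q)\<^sup>2"
    by (simp add: power2_eq_square algebra_simps)
  then have "int (4 * (p * q)) \<le> int ((p + q)\<^sup>2)" by simp
  then show ?thesis by (simp only: of_nat_le_iff)
qed

lemma balanced_if_square_le_four_mult_plus_one:
  assumes "p + q \<le> (n::nat)" and "n\<^sup>2 \<le> 4 * (p * q) + 1"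
  shows "(p + q = n \<and> p \<le> q + 1 \<and> q \<le> p + 1) \<or> n \<le> 1"
proof (cases "p + q = n")
  case True
  have "(int p + int q)\<^sup>2 = 4 * int p * int q + (int p - int q)\<^sup>2"
    by (simp add: power2_eq_square algebra_simps)
  moreover have "int ((p + q)\<^sup>2) \<le> int (4 * (p * q) + 1)"
    using assms(2) True by (simp only: of_nat_le_iff)
  then have "(int p + int q)\<^sup>2 \<le> 4 * int p * int q + 1" by simp
  ultimately have "\<bar>int p - int q\<bar> \<le> 1"
    using abs_square_le_1 by fastforce
  then show ?thesis using True by linarith
next
  case False
  with assms(1) have "(p + q + 1)\<^sup>2 \<le> n\<^sup>2"
    by (intro power_mono) simp_all
  moreover have "(p + q + 1)\<^sup>2 = (p + q)\<^sup>2 + 2 * (p + q) + 1"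
    by (simp add: power2_eq_square algebra_simps)
  ultimately have "2 * (p + q) \<le> 0"
    using assms(2) four_mult_le_square_add[of p q] by linarith
  with assms(2) have "n * n \<le> 1" by (simp add: power2_eq_square)
  then show ?thesis
    by (metis le_square mult.right_neutral mult_le_mono2 nat_le_linear order_trans)
qed

lemma four_mult_add_bound:
  assumes "1 \<le> p" and "1 \<le> q" and "1 \<le> t" and "p + q + t \<le> (n::nat)"
  shows "4 * (p * q) + 4 * t + 1 \<le> n\<^sup>2"
    and "n\<^sup>2 \<le> 4 * (p * q) + 4 * t + 1 \<Longrightarrow> n = 3 \<and> p = 1 \<and> q = 1 \<and> t = 1"
proof -
  define m where "m = p + q"
  have m: "2 \<le> m" using assms(1,2) m_def by simp
  have "(m + t)\<^sup>2 \<le> n\<^sup>2"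
    using assms(4) m_def by (intro power_mono) simp_all
  then have sq: "m\<^sup>2 + 2 * m * t + t * t \<le> n\<^sup>2"
    by (simp add: power2_eq_square algebra_simps)
  have pq: "4 * (p * q) \<le> m\<^sup>2"
    using four_mult_le_square_add[of p q] m_def by simp
  have mt: "4 * t \<le> 2 * m * t" using m by simp
  have tt: "t \<le> t * t" using assms(3) by simp
  show "4 * (p * q) + 4 * t + 1 \<le> n\<^sup>2"
    using sq pq mt tt assms(3) by linarith
  assume "n\<^sup>2 \<le> 4 * (p * q) + 4 * t + 1"
  with sq pq mt have "m\<^sup>2 + 2 * m * t + t * t \<le> m\<^sup>2 + 4 * t + 1" by linarith
  with mt have "t * t \<le> 1" by linarith
  with tt assms(3) have t: "t = 1" by linarith
  with \<open>m\<^sup>2 + 2 * m * t + t * t \<le> m\<^sup>2 + 4 * t + 1\<close> m have "m = 2" by simp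
  with assms(1,2) m_def have pq1: "p = 1" "q = 1" by auto
  with t \<open>n\<^sup>2 \<le> 4 * (p * q) + 4 * t + 1\<close> have "n * n \<le> 3 * 3"
    by (simp add: power2_eq_square)
  then have "n \<le> 3" using mult_le_mono[of 4 n 4 n] by linarith
  with assms(4) t pq1 show "n = 3 \<and> p = 1 \<and> q = 1 \<and> t = 1" by simp
qed

lemma num_components_line_complete_bipartite:
  assumes "X \<inter> Y = {}"
  shows "num_components_line {(x, y). x \<in> X \<and> y \<in> Y} = card X * card Y"
proof -
  let ?A = "{(x, y). x \<in> X \<and> y \<in> Y}"
  have "line_adj ?A = {}"
    using assms unfolding line_adj_def by auto
  then have "?A // line_conn ?A = (\<lambda>a. {a}) ` (X \<times> Y)"
    unfolding quotient_eq_Image_image by auto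
  then show ?thesis
    unfolding num_components_line_def by (simp add: card_image card_cartesian_product)
qed

lemma num_components_line_transitive_triangle:
  assumes "u \<noteq> v" "v \<noteq> w" "u \<noteq> w"
  shows "num_components_line {(u, v), (v, w), (u, w)} = 2"
proof -
  let ?T = "{(u, v), (v, w), (u, w)}" and ?P = "{(u, v), (v, w)}"
  have adj: "line_adj ?T = {((u, v), (v, w)), ((v, w), (u, v))}"
    using assms unfolding line_adj_def by auto
  then have "line_conn ?T``?P = ?P"
    by (intro Image_closed_trancl) auto
  moreover have "((u, v), (v, w)) \<in> line_conn ?T" "((v, w), (u, v)) \<in> line_conn ?T"
    using adj by auto
  ultimately have "line_conn ?T``{(u, v)} = ?P" "line_conn ?T``{(v, w)} = ?P"
    by blast+
  moreover have "line_conn ?T``{(u, w)} = {(u, w)}"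
    using adj assms by (intro Image_closed_trancl) auto
  ultimately have "?T // line_conn ?T = {?P, {(u, w)}}"
    unfolding quotient_eq_Image_image by auto
  then show ?thesis
    using assms unfolding num_components_line_def by simp
qed

lemma transitive_tournament_triangle:
  assumes "u \<noteq> v" "v \<noteq> w" "u \<noteq> w"
  shows "transitive_tournament {u, v, w} {(u, v), (v, w), (u, w)}"
proof -
  define rank where "rank x = (if x = u then 0 else if x = v then 1 else 2 :: nat)" for x
  have "{(u, v), (v, w), (u, w)} \<subseteq> inv_image less_than rank"
    using assms unfolding rank_def by auto
  then have "acyclic {(u, v), (v, w), (u, w)}"
    by (meson wf_acyclic wf_inv_image wf_less_than wf_subset)
  then show ?thesis
    using assms unfolding transitive_tournament_def tournament_def digraph_def by auto
qed

text \<open>Each of the three pairs is oriented one way, and every orientation of a triangle other than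
  the two cyclic ones contains a transitive triple.\<close>

lemma transitive_tournament_card_3_cases:
  assumes tt: "transitive_tournament V A" and "card V = 3"
  obtains u v w where "u \<noteq> v" "v \<noteq> w" "u \<noteq> w" "V = {u, v, w}" "A = {(u, v), (v, w), (u, w)}"
proof -
  obtain a b c where V: "V = {a, b, c}" and d: "a \<noteq> b" "b \<noteq> c" "a \<noteq> c"
    using card_3_iff[THEN iffD1, OF \<open>card V = 3\<close>] by blast
  have sub: "A \<subseteq> V \<times> V" and noloop: "\<forall>v. (v, v) \<notin> A" and ac: "acyclic A"
    and tour: "\<And>x y. x \<in> V \<Longrightarrow> y \<in> V \<Longrightarrow> x \<noteq> y \<Longrightarrow> (x, y) \<in> A \<longleftrightarrow> (y, x) \<notin> A"
    using tt unfolding transitive_tournament_def tournament_def digraph_def by blast+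
  have no_cycle: "\<not> ((x, y) \<in> A \<and> (y, z) \<in> A \<and> (z, x) \<in> A)" for x y z
  proof
    assume "(x, y) \<in> A \<and> (y, z) \<in> A \<and> (z, x) \<in> A"
    then have "(x, x) \<in> A\<^sup>+"
      by (meson r_into_trancl trancl_into_trancl)
    with ac show False
      unfolding acyclic_def by blast
  qed
  have "(a, b) \<in> A \<longleftrightarrow> (b, a) \<notin> A" "(b, c) \<in> A \<longleftrightarrow> (c, b) \<notin> A" "(a, c) \<in> A \<longleftrightarrow> (c, a) \<notin> A"
    using tour d unfolding V by blast+
  then obtain u v w where uvw: "(u, v) \<in> A" "(v, w) \<in> A" "(u, w) \<in> A"
    using no_cycle[of a b c] no_cycle[of a c b] by blast
  then have d': "u \<noteq> v" "v \<noteq> w" "u \<noteq> w"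
    using noloop sub tour[of u v] by auto
  have "{u, v, w} \<subseteq> V" "card {u, v, w} = card V"
    using uvw sub d' \<open>card V = 3\<close> by auto
  then have V': "V = {u, v, w}"
    using card_subset_eq[of V "{u, v, w}"] \<open>card V = 3\<close> card.infinite by fastforce
  have "A \<subseteq> {(u, v), (v, w), (u, w)}"
  proof
    fix e assume "e \<in> A"
    moreover obtain x y where "e = (x, y)" by (cases e)
    ultimately show "e \<in> {(u, v), (v, w), (u, w)}"
      using sub noloop V' tour[of u v] tour[of v w] tour[of u w] d' uvw by blast
  qed
  with uvw d' V' show thesis
    using that by blast
qed

lemma transitive_tournament_if_one_source_sink_transit:
  assumes sd: "strict_digraph V A" and "card V = 3"
    and S: "sources A = {u}" and T: "sinks A = {w}" and Tr: "transit_vertices A = {v}"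
    and uw: "(u, w) \<in> A"
  shows "transitive_tournament V A"
proof -
  have finV: "finite V" and sub: "A \<subseteq> V \<times> V" and noloop: "\<forall>x. (x, x) \<notin> A"
    using sd unfolding strict_digraph_def digraph_def by auto
  have no_in_u: "(x, u) \<notin> A" and no_out_w: "(w, x) \<notin> A" for x
    using S T unfolding sources_def sinks_def by auto
  have d: "u \<noteq> v" "v \<noteq> w" "u \<noteq> w"
    using S T Tr unfolding sources_def sinks_def transit_vertices_def by blast+
  have "{u, v, w} \<subseteq> V"
    using S T Tr sub unfolding sources_def sinks_def transit_vertices_def by blast
  moreover have "card {u, v, w} = card V"
    using d \<open>card V = 3\<close> by simp
  ultimately have V: "V = {u, v, w}"
    using finV card_subset_eq by blast
  obtain x y where xv: "(x, v) \<in> A" and vy: "(v, y) \<in> A"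
    using Tr unfolding transit_vertices_def by blast
  moreover have "x \<in> V" "y \<in> V"
    using xv vy sub by auto
  ultimately have "(u, v) \<in> A" "(v, w) \<in> A"
    using noloop no_in_u no_out_w unfolding V by blast+
  moreover have "A \<subseteq> {(u, v), (v, w), (u, w)}"
  proof
    fix e assume e: "e \<in> A"
    then obtain a b where ab: "e = (a, b)" "a \<in> V" "b \<in> V"
      using sub by blast
    moreover have "a \<noteq> b" "a \<noteq> w" "b \<noteq> u"
      using e ab noloop no_in_u no_out_w by blast+
    ultimately show "e \<in> {(u, v), (v, w), (u, w)}"
      unfolding V by blast
  qed
  ultimately have "A = {(u, v), (v, w), (u, w)}"
    using uw by blast
  then show ?thesis
    using transitive_tournament_triangle[OF d] V by simp
qed

lemma num_components_line_transitive_tournament_card_3: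
  assumes "transitive_tournament V A" and "card V = 3"
  shows "num_components_line A = f_bound (card V)"
proof -
  obtain u v w where "u \<noteq> v" "v \<noteq> w" "u \<noteq> w" "A = {(u, v), (v, w), (u, w)}"
    using transitive_tournament_card_3_cases[OF assms] by metis
  then show ?thesis
    using num_components_line_transitive_triangle assms(2) by (simp add: f_bound_def)
qed

definition balanced_bipartite_orientation :: "'a set \<Rightarrow> ('a \<times> 'a) set \<Rightarrow> bool" where
  "balanced_bipartite_orientation V A \<longleftrightarrow>
     (\<exists>X Y. X \<union> Y = V \<and> X \<inter> Y = {} \<and>
            (card X \<le> card Y + 1 \<and> card Y \<le> card X + 1) \<and>
            A = {(x, y). x \<in> X \<and> y \<in> Y})"

lemma num_components_line_balanced_bipartite_orientation:
  assumes "finite V" and "balanced_bipartite_orientation V A"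
  shows "num_components_line A = f_bound (card V)"
proof -
  obtain X Y where XY: "X \<union> Y = V" "X \<inter> Y = {}" "card X \<le> card Y + 1" "card Y \<le> card X + 1"
    and A: "A = {(x, y). x \<in> X \<and> y \<in> Y}"
    using assms(2) unfolding balanced_bipartite_orientation_def by blast
  have "card V = card X + card Y"
    using XY(1,2) assms(1) card_Un_disjoint[of X Y] by auto
  then show ?thesis
    using num_components_line_complete_bipartite[OF XY(2)] mult_eq_f_bound_add[OF XY(3,4)] A
    by simp
qed

lemma balanced_bipartite_orientation_sources_sinks:
  assumes sd: "strict_digraph V A" and A: "A = sources A \<times> sinks A"
    and "(card (sources A) + card (sinks A) = card V \<and>
          card (sources A) \<le> card (sinks A) + 1 \<and> card (sinks A) \<le> card (sources A) + 1)
         \<or> card V \<le> 1"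
  shows "balanced_bipartite_orientation V A"
proof -
  let ?S = "sources A" and ?T = "sinks A"
  have finV: "finite V" and sub: "A \<subseteq> V \<times> V"
    using sd unfolding strict_digraph_def digraph_def by auto
  have ST: "?S \<subseteq> V" "?T \<subseteq> V" and disj: "?S \<inter> ?T = {}"
    using sub unfolding sources_def sinks_def by auto
  from assms(3) show ?thesis
  proof
    assume "card ?S + card ?T = card V \<and> card ?S \<le> card ?T + 1 \<and> card ?T \<le> card ?S + 1"
    moreover from this have "?S \<union> ?T = V"
      using ST finV disj card_Un_disjoint[of ?S ?T] card_subset_eq[of V "?S \<union> ?T"]
      by (auto intro: finite_subset)
    ultimately show ?thesis
      unfolding balanced_bipartite_orientation_def using A disj by blast
  next
    assume "card V \<le> 1"
    then have "card ?S = 0 \<or> card ?T = 0"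
      using card_sources_sinks_transit_le[OF sd] by linarith
    then have "A = {}"
      using A ST finV by (auto dest: finite_subset)
    with \<open>card V \<le> 1\<close> show ?thesis
      unfolding balanced_bipartite_orientation_def
      by (intro exI[of _ V] exI[of _ "{}"]) simp
  qed
qed

lemma num_components_line_without_transit:
  assumes sd: "strict_digraph V A" and no_transit: "transit_vertices A = {}"
  shows "num_components_line A \<le> f_bound (card V) \<and>
    (num_components_line A = f_bound (card V) \<longrightarrow> balanced_bipartite_orientation V A)"
proof -
  let ?c = "num_components_line A" and ?n = "card V" and ?S = "sources A" and ?T = "sinks A"
  have finV: "finite V" and sub: "A \<subseteq> V \<times> V"
    using sd unfolding strict_digraph_def digraph_def by auto
  have ST: "?S \<subseteq> V" "?T \<subseteq> V"
    using sub unfolding sources_def sinks_def by auto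
  then have finST: "finite (?S \<times> ?T)"
    using finV by (auto intro: finite_subset)
  have A: "A \<subseteq> ?S \<times> ?T"
    using arc_subset_sources_times_sinks[OF no_transit] .
  have c: "?c \<le> card A"
    using num_components_line_le[OF sd] A no_transit by (simp add: Int_absorb2)
  have card_A: "card A \<le> card ?S * card ?T"
    using card_mono[OF finST A] by (simp add: card_cartesian_product)
  have ST_n: "card ?S + card ?T \<le> ?n"
    using card_sources_sinks_transit_le[OF sd] by simp
  then have "(card ?S + card ?T)\<^sup>2 \<le> ?n\<^sup>2"
    by (rule power_mono) simp
  then have "4 * (card ?S * card ?T) \<le> ?n\<^sup>2"
    using four_mult_le_square_add[of "card ?S" "card ?T"] by linarith
  then have "?c \<le> f_bound ?n"
    using c card_A f_bound_bounds[of ?n] by linarith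
  moreover have "balanced_bipartite_orientation V A" if eq: "?c = f_bound ?n"
  proof -
    have "?n\<^sup>2 \<le> 4 * (card ?S * card ?T) + 1" "card ?S * card ?T \<le> card A"
      using eq c card_A f_bound_bounds[of ?n] \<open>4 * (card ?S * card ?T) \<le> ?n\<^sup>2\<close> by linarith+
    then have balanced: "(card ?S + card ?T = ?n \<and> card ?S \<le> card ?T + 1 \<and> card ?T \<le> card ?S + 1)
        \<or> ?n \<le> 1" and "card A = card (?S \<times> ?T)"
      using balanced_if_square_le_four_mult_plus_one[OF ST_n] card_A
      by (simp_all add: card_cartesian_product)
    then have "A = ?S \<times> ?T"
      using card_subset_eq[OF finST A] by blast
    then show ?thesis
      using balanced_bipartite_orientation_sources_sinks[OF sd _ balanced] by simp
  qed
  ultimately show ?thesis by blast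
qed

lemma num_components_line_lt_without_sources_or_sinks:
  assumes sd: "strict_digraph V A" and "asymmetric A" and "transit_vertices A \<noteq> {}"
    and "sources A = {} \<or> sinks A = {}"
  shows "num_components_line A < f_bound (card V)"
proof -
  have "3 \<le> card V"
    using card_ge_3_if_transit_vertex[OF sd assms(2,3)] .
  then have "3 * card V \<le> (card V)\<^sup>2"
    by (simp add: power2_eq_square)
  moreover have "2 * num_components_line A \<le> card V"
    using two_mult_num_components_line_le[OF sd assms(4)] card_sources_sinks_transit_le[OF sd]
    by linarith
  ultimately show ?thesis
    using \<open>3 \<le> card V\<close> f_bound_bounds[of "card V"] by linarith
qed

lemma num_components_line_with_sources_and_sinks:
  assumes sd: "strict_digraph V A" and "transit_vertices A \<noteq> {}"
    and "sources A \<noteq> {}" and "sinks A \<noteq> {}"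
  shows "num_components_line A \<le> f_bound (card V) \<and>
    (num_components_line A = f_bound (card V) \<longrightarrow> card V = 3 \<and> transitive_tournament V A)"
proof -
  let ?c = "num_components_line A" and ?n = "card V"
  let ?p = "card (sources A)" and ?q = "card (sinks A)" and ?t = "card (transit_vertices A)"
  have finV: "finite V" and sub: "A \<subseteq> V \<times> V"
    using sd unfolding strict_digraph_def digraph_def by auto
  have fin: "finite (sources A)" "finite (sinks A)" "finite (transit_vertices A)"
    using sub finV unfolding sources_def sinks_def transit_vertices_def
    by (auto intro: finite_subset)
  with assms(2-4) have pqt: "1 \<le> ?p" "1 \<le> ?q" "1 \<le> ?t"
    by (simp_all add: Suc_le_eq card_gt_0_iff)
  have n: "?p + ?q + ?t \<le> ?n"
    using card_sources_sinks_transit_le[OF sd] .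
  have arcs_ST: "card (A \<inter> (sources A \<times> sinks A)) \<le> ?p * ?q"
    using fin card_mono[of "sources A \<times> sinks A" "A \<inter> (sources A \<times> sinks A)"]
    by (simp add: card_cartesian_product)
  have c: "?c \<le> card (A \<inter> (sources A \<times> sinks A)) + ?t"
    using num_components_line_le[OF sd] .
  have "?c \<le> f_bound ?n"
    using four_mult_add_bound(1)[OF pqt n] c arcs_ST f_bound_bounds[of ?n] by linarith
  moreover have "?n = 3 \<and> transitive_tournament V A" if eq: "?c = f_bound ?n"
  proof -
    have "?n = 3 \<and> ?p = 1 \<and> ?q = 1 \<and> ?t = 1"
      using four_mult_add_bound(2)[OF pqt n] eq c arcs_ST f_bound_bounds[of ?n] by linarith
    then obtain u w v where S: "sources A = {u}" and T: "sinks A = {w}"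
      and Tr: "transit_vertices A = {v}" and n3: "?n = 3"
      by (auto simp: card_1_singleton_iff)
    moreover have "A \<inter> (sources A \<times> sinks A) \<noteq> {}"
      using eq c n3 Tr by (auto simp: f_bound_def)
    ultimately have "(u, w) \<in> A" by auto
    then show ?thesis
      using transitive_tournament_if_one_source_sink_transit[OF sd n3 S T Tr] n3 by simp
  qed
  ultimately show ?thesis by blast
qed

theorem theorem2p4:
  fixes V :: "'a set" and A :: "('a \<times> 'a) set"
  assumes "strict_digraph V A" and "asymmetric A"
  shows "num_components_line A \<le> f_bound (card V) \<and>
         (num_components_line A = f_bound (card V) \<longleftrightarrow>
           ((card V = 3 \<and> transitive_tournament V A) \<or>
            (\<exists>X Y. X \<union> Y = V \<and> X \<inter> Y = {} \<and>
                   (card X \<le> card Y + 1 \<and> card Y \<le> card X + 1) \<and>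
                   A = {(x, y). x \<in> X \<and> y \<in> Y})))"
proof -
  let ?c = "num_components_line A" and ?f = "f_bound (card V)"
  let ?extremal = "(card V = 3 \<and> transitive_tournament V A) \<or> balanced_bipartite_orientation V A"
  have "?c \<le> ?f \<and> (?c = ?f \<longrightarrow> ?extremal)"
  proof (cases "transit_vertices A = {}")
    case True
    then show ?thesis
      using num_components_line_without_transit[OF assms(1)] by blast
  next
    case False
    then show ?thesis
      using num_components_line_lt_without_sources_or_sinks[OF assms False]
        num_components_line_with_sources_and_sinks[OF assms(1) False]
      by (cases "sources A = {} \<or> sinks A = {}") auto
  qed
  moreover have "?c = ?f" if ?extremal
    using that num_components_line_transitive_tournament_card_3
      num_components_line_balanced_bipartite_orientation assms(1)
    unfolding strict_digraph_def digraph_def by blast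
  ultimately show ?thesis
    unfolding balanced_bipartite_orientation_def by blast
qed

end
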